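(* For every integer $n\ge2$, $$F_{n-2}=\sum_{(a_1,\dots,a_k)\in C(n)}\Bigl\lfloor\frac{a_1-1}{2}\Bigr\rfloor\cdots\Bigl\lfloor\frac{a_k-1}{2}\Bigr\rfloor.$$
   Context: $C(n)$ is the set of all compositions $(a_1,\dots,a_k)$ of $n$ (sequences of positive integers with sum $n$, any number of parts). Fibonacci numbers: $F_0=0$, $F_1=1$, $F_n=F_{n-1}+F_{n-2}$. *)

theory Defs
  imports Main "HOL-Number_Theory.Fib"
begin

definition compositions :: "nat \<Rightarrow> nat list set" where
  "compositions n = {as. (\<forall>a\<in>set as. 0 < a) \<and> sum_list as = n}"

end

theory Submission
  imports Defs
begin

text \<open>
  Let \<open>S n\<close> be the weighted sum over compositions of \<open>n\<close>, each part \<open>a\<close> weighted by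
  \<open>w a = \<lfloor>(a - 1)/2\<rfloor>\<close>. Splitting off the first part gives the convolution
  \<open>S (n+1) = \<Sum>a. w (a+1) S (n - a)\<close>. Since \<open>w 1 = w 2 = 0\<close> and \<open>w (a+2) = w a + 1\<close>,
  this convolution for \<open>S (n+2)\<close> reproduces the one for \<open>S n\<close> plus all the earlier
  values: \<open>S (n+2) = S n + \<Sum>c<n. S c\<close> for \<open>n \<ge> 1\<close>. Subtracting two consecutive
  instances yields the Fibonacci recurrence, with \<open>S 2 = 0\<close> and \<open>S 3 = 1\<close>.
\<close>

definition composition_weight_sum :: "(nat \<Rightarrow> 'a::comm_semiring_1) \<Rightarrow> nat \<Rightarrow> 'a" where
  "composition_weight_sum w n = (\<Sum>as\<in>compositions n. \<Prod>a\<leftarrow>as. w a)"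

lemma finite_compositions: "finite (compositions n)"
proof (rule finite_subset)
  show "compositions n \<subseteq> {xs. set xs \<subseteq> {..n} \<and> length xs \<le> n}"
  proof
    fix xs assume "xs \<in> compositions n"
    hence pos: "\<forall>a\<in>set xs. 0 < a" and sum: "sum_list xs = n" by (auto simp: compositions_def)
    have "length xs \<le> sum_list xs" using pos by (induction xs) auto
    with sum show "xs \<in> {xs. set xs \<subseteq> {..n} \<and> length xs \<le> n}"
      using member_le_sum_list by fastforce
  qed
  show "finite {xs. set xs \<subseteq> {..n} \<and> length xs \<le> n}"
    by (rule finite_lists_length_le) simp
qed

lemma compositions_0 [simp]: "compositions 0 = {[]}"
  by (auto simp: compositions_def) (metis list.exhaust list.set_intros(1) not_gr0)

lemma compositions_Suc:
  "compositions (Suc m) = (\<Union>a<Suc m. (#) (Suc a) ` compositions (m - a))"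
proof
  show "compositions (Suc m) \<subseteq> (\<Union>a<Suc m. (#) (Suc a) ` compositions (m - a))"
  proof
    fix xs assume xs: "xs \<in> compositions (Suc m)"
    then obtain a ys where "xs = Suc a # ys" "a < Suc m" "ys \<in> compositions (m - a)"
      by (cases xs) (auto simp: compositions_def gr0_conv_Suc)
    thus "xs \<in> (\<Union>a<Suc m. (#) (Suc a) ` compositions (m - a))" by blast
  qed
qed (auto simp: compositions_def)

lemma composition_weight_sum_0 [simp]: "composition_weight_sum w 0 = 1"
  by (simp add: composition_weight_sum_def)

lemma composition_weight_sum_Suc:
  "composition_weight_sum w (Suc m) =
     (\<Sum>a<Suc m. w (Suc a) * composition_weight_sum w (m - a))"
proof -
  have "composition_weight_sum w (Suc m) =
      (\<Sum>a<Suc m. \<Sum>as\<in>(#) (Suc a) ` compositions (m - a). \<Prod>b\<leftarrow>as. w b)"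
    unfolding composition_weight_sum_def compositions_Suc
    by (rule sum.UNION_disjoint) (auto simp: finite_compositions)
  also have "\<dots> = (\<Sum>a<Suc m. w (Suc a) * composition_weight_sum w (m - a))"
    by (rule sum.cong) (simp_all add: sum.reindex composition_weight_sum_def sum_distrib_left)
  finally show ?thesis .
qed

lemma composition_weight_sum_add_three:
  fixes w :: "nat \<Rightarrow> 'a::comm_semiring_1"
  assumes w_step: "\<And>a. w (a + 2) = w a + 1"
  defines "S \<equiv> composition_weight_sum w"
  shows "S (k + 3) = w 1 * S (k + 2) + w 2 * S (k + 1) + S (k + 1) + (\<Sum>c\<le>k. S c)"
proof -
  have "S (k + 3) = (\<Sum>a<Suc (Suc (Suc k)). w (Suc a) * S (Suc (Suc k) - a))"
    using composition_weight_sum_Suc[of w "k + 2"] by (simp add: S_def numeral_3_eq_3)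
  also have "\<dots> = w 1 * S (k + 2) + w 2 * S (k + 1) + (\<Sum>a<Suc k. w (Suc a + 2) * S (k - a))"
    unfolding sum.lessThan_Suc_shift by (simp add: add.assoc numeral_2_eq_2)
  also have "(\<Sum>a<Suc k. w (Suc a + 2) * S (k - a)) =
      (\<Sum>a<Suc k. w (Suc a) * S (k - a)) + (\<Sum>a<Suc k. S (k - a))"
    by (simp only: w_step distrib_right sum.distrib mult_1)
  also have "(\<Sum>a<Suc k. w (Suc a) * S (k - a)) = S (k + 1)"
    by (simp add: S_def composition_weight_sum_Suc)
  also have "(\<Sum>a<Suc k. S (k - a)) = (\<Sum>c\<le>k. S c)"
    using sum.nat_diff_reindex[of S "Suc k"] by (simp add: lessThan_Suc_atMost)
  finally show ?thesis by (simp add: add.assoc)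
qed

definition half_floor :: "nat \<Rightarrow> int" where
  "half_floor a = \<lfloor>(real a - 1) / 2\<rfloor>"

lemma half_floor_add_two: "half_floor (a + 2) = half_floor a + 1"
proof -
  have "(real (a + 2) - 1) / 2 = (real a - 1) / 2 + 1" by (simp add: field_simps)
  then have "\<lfloor>(real (a + 2) - 1) / 2\<rfloor> = \<lfloor>(real a - 1) / 2\<rfloor> + 1"
    by (metis floor_add_int of_int_1)
  thus ?thesis by (simp add: half_floor_def)
qed

lemma half_floor_1: "half_floor 1 = 0"
  and half_floor_2: "half_floor 2 = 0"
  by (simp_all add: half_floor_def)

abbreviation half_floor_sum :: "nat \<Rightarrow> int" where
  "half_floor_sum \<equiv> composition_weight_sum half_floor"

lemma half_floor_sum_add_three:
  "half_floor_sum (k + 3) = half_floor_sum (k + 1) + (\<Sum>c\<le>k. half_floor_sum c)"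
  using composition_weight_sum_add_three[of half_floor k, OF half_floor_add_two]
  unfolding half_floor_1 half_floor_2 by simp

lemma half_floor_sum_1: "half_floor_sum 1 = 0"
  using composition_weight_sum_Suc[of half_floor 0] by (simp add: half_floor_def)

lemma half_floor_sum_2: "half_floor_sum 2 = 0"
  using composition_weight_sum_Suc[of half_floor 1] half_floor_sum_1
  by (simp add: numeral_2_eq_2 half_floor_2[unfolded numeral_2_eq_2])

lemma half_floor_sum_3: "half_floor_sum 3 = 1"
  using half_floor_sum_add_three[of 0] half_floor_sum_1 by (simp add: numeral_3_eq_3)

lemma half_floor_sum_fib_step:
  "half_floor_sum (Suc (Suc k) + 2) = half_floor_sum (Suc k + 2) + half_floor_sum (k + 2)"
  using half_floor_sum_add_three[of "Suc k"] half_floor_sum_add_three[of k]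
  by (simp add: numeral_eq_Suc)

lemma half_floor_sum_eq_fib: "half_floor_sum (n + 2) = int (fib n)"
proof (induction n rule: fib.induct)
  case 1
  show ?case using half_floor_sum_2 by (simp add: numeral_2_eq_2)
next
  case 2
  show ?case using half_floor_sum_3 by (simp add: numeral_3_eq_3)
next
  case (3 n)
  with half_floor_sum_fib_step[of n] show ?case by simp
qed

theorem mainTheorem15:
  fixes n :: nat
  assumes "n \<ge> 2"
  shows "int (fib (n - 2)) =
    (\<Sum>as\<in>compositions n. \<Prod>a\<leftarrow>as. \<lfloor>(real a - 1) / 2\<rfloor>)"
proof -
  define k where "k = n - 2"
  with assms have n: "n = k + 2" by simp
  have "int (fib (n - 2)) = half_floor_sum n" using half_floor_sum_eq_fib[of k] n by simp
  also have "\<dots> = (\<Sum>as\<in>compositions n. \<Prod>a\<leftarrow>as. \<lfloor>(real a - 1) / 2\<rfloor>)"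
    by (simp add: composition_weight_sum_def half_floor_def)
  finally show ?thesis .
qed

end
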